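(* Let $\mathbf A=(A;\cdot,\to,\leadsto,1)$ be a pseudo-hoop and let $x,y\in A$ be such that $x\vee y=1$. Then $x\cdot y=x\wedge y=y\cdot x$ and $x\to y=x\leadsto y=y$.
   Context: A pseudo-hoop is an algebra $(A;\cdot,\to,\leadsto,1)$ of type $\langle 2,2,2,0\rangle$ such that for all $x,y,z\in A$: $x\cdot 1=x=1\cdot x$; $x\to x=1=x\leadsto x$; $(x\cdot y)\to z=x\to(y\to z)$; $(x\cdot y)\leadsto z=y\leadsto(x\leadsto z)$; and $(x\to y)\cdot x=(y\to x)\cdot y=x\cdot(x\leadsto y)=y\cdot(y\leadsto x)$. Setting $x\le y$ iff $x\to y=1$ gives a partial order with greatest element $1$ in which $x\wedge y=(x\to y)\cdot x$. "$x\vee y=1$" means the supremum of $\{x,y\}$ exists and equals $1$. *)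

theory Defs
  imports Main
begin

text \<open>A pseudo-hoop (A; mult, imp (\<rightarrow>), limp (\<leadsto>), one), carrier = the whole type.\<close>
definition pseudo_hoop ::
  "('a \<Rightarrow> 'a \<Rightarrow> 'a) \<Rightarrow> ('a \<Rightarrow> 'a \<Rightarrow> 'a) \<Rightarrow> ('a \<Rightarrow> 'a \<Rightarrow> 'a) \<Rightarrow> 'a \<Rightarrow> bool" where
  "pseudo_hoop m imp limp one \<longleftrightarrow>
     (\<forall>x. m x one = x \<and> m one x = x) \<and>
     (\<forall>x. imp x x = one \<and> limp x x = one) \<and>
     (\<forall>x y z. imp (m x y) z = imp x (imp y z)) \<and>
     (\<forall>x y z. limp (m x y) z = limp y (limp x z)) \<and>
     (\<forall>x y. m (imp x y) x = m (imp y x) y \<and>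
            m (imp y x) y = m x (limp x y) \<and>
            m x (limp x y) = m y (limp y x))"

definition ph_le :: "('a \<Rightarrow> 'a \<Rightarrow> 'a) \<Rightarrow> 'a \<Rightarrow> 'a \<Rightarrow> 'a \<Rightarrow> bool" where
  "ph_le imp one x y \<longleftrightarrow> imp x y = one"

definition ph_meet :: "('a \<Rightarrow> 'a \<Rightarrow> 'a) \<Rightarrow> ('a \<Rightarrow> 'a \<Rightarrow> 'a) \<Rightarrow> 'a \<Rightarrow> 'a \<Rightarrow> 'a" where
  "ph_meet m imp x y = m (imp x y) x"

definition ph_is_sup :: "('a \<Rightarrow> 'a \<Rightarrow> 'a) \<Rightarrow> 'a \<Rightarrow> 'a \<Rightarrow> 'a \<Rightarrow> 'a \<Rightarrow> bool" where
  "ph_is_sup imp one x y s \<longleftrightarrow>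
     ph_le imp one x s \<and> ph_le imp one y s \<and>
     (\<forall>z. ph_le imp one x z \<and> ph_le imp one y z \<longrightarrow> ph_le imp one s z)"

end

theory Submission
  imports Defs
begin

text \<open>
  Put \<open>u = (x \<leadsto> y) \<rightarrow> y\<close>. By divisibility \<open>x \<cdot> (x \<leadsto> y) = (y \<rightarrow> x) \<cdot> y \<le> y\<close>, so
  residuation gives \<open>x \<le> u\<close>; trivially \<open>y \<le> u\<close>. Hence \<open>u\<close> is an upper bound of \<open>x\<close>
  and \<open>y\<close>, so \<open>u = 1\<close>, i.e. \<open>x \<leadsto> y \<le> y\<close>; together with \<open>y \<le> x \<leadsto> y\<close> this gives
  \<open>x \<leadsto> y = y\<close>. The mirror argument with \<open>(x \<rightarrow> y) \<leadsto> y\<close> gives \<open>x \<rightarrow> y = y\<close>, and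
  then \<open>x \<and> y = (x \<rightarrow> y) \<cdot> x = y \<cdot> x\<close> and, by divisibility,
  \<open>x \<and> y = x \<cdot> (x \<leadsto> y) = x \<cdot> y\<close>.
\<close>

locale ph_algebra =
  fixes m :: "'a \<Rightarrow> 'a \<Rightarrow> 'a" (infixl "\<cdot>" 70)
    and imp :: "'a \<Rightarrow> 'a \<Rightarrow> 'a" (infixr "\<rightarrow>" 60)
    and limp :: "'a \<Rightarrow> 'a \<Rightarrow> 'a" (infixr "\<leadsto>" 60)
    and one :: 'a
  assumes mult_one_right: "x \<cdot> one = x"
    and mult_one_left: "one \<cdot> x = x"
    and imp_self: "x \<rightarrow> x = one"
    and limp_self: "x \<leadsto> x = one"
    and imp_mult: "(x \<cdot> y) \<rightarrow> z = x \<rightarrow> (y \<rightarrow> z)"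
    and limp_mult: "(x \<cdot> y) \<leadsto> z = y \<leadsto> (x \<leadsto> z)"
    and imp_divisibility: "(x \<rightarrow> y) \<cdot> x = (y \<rightarrow> x) \<cdot> y"
    and imp_limp_divisibility: "(y \<rightarrow> x) \<cdot> y = x \<cdot> (x \<leadsto> y)"
    and limp_divisibility: "x \<cdot> (x \<leadsto> y) = y \<cdot> (y \<leadsto> x)"
begin

abbreviation le :: "'a \<Rightarrow> 'a \<Rightarrow> bool" (infix "\<preceq>" 50)
  where "x \<preceq> y \<equiv> ph_le imp one x y"

lemma imp_one: "x \<rightarrow> one = one"
  by (metis imp_self imp_mult imp_divisibility imp_limp_divisibility)

lemma limp_one: "x \<leadsto> one = one"
  by (metis mult_one_right limp_divisibility limp_self limp_mult)

lemma one_imp: "one \<rightarrow> x = x"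
  by (metis imp_limp_divisibility imp_one mult_one_left mult_one_right limp_divisibility)

lemma le_antisym: "x \<preceq> y \<Longrightarrow> y \<preceq> x \<Longrightarrow> x = y"
  unfolding ph_le_def by (metis mult_one_left imp_divisibility)

lemma one_le_iff: "one \<preceq> x \<longleftrightarrow> x = one"
  by (simp add: ph_le_def one_imp)

lemma mult_le_iff_le_imp: "x \<cdot> y \<preceq> z \<longleftrightarrow> x \<preceq> y \<rightarrow> z"
  by (simp add: ph_le_def imp_mult)

lemma mult_le_right: "x \<cdot> y \<preceq> y"
  by (simp add: ph_le_def imp_mult imp_self imp_one)

lemma mult_limp_le: "x \<cdot> (x \<leadsto> y) \<preceq> y"
  unfolding imp_limp_divisibility[symmetric] by (rule mult_le_right)

lemma le_iff_limp_eq_one: "x \<preceq> y \<longleftrightarrow> x \<leadsto> y = one"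
proof
  assume "x \<preceq> y"
  then have "x = y \<cdot> (y \<leadsto> x)"
    by (metis ph_le_def mult_one_left imp_divisibility imp_limp_divisibility limp_divisibility)
  then show "x \<leadsto> y = one"
    by (metis limp_mult limp_self limp_one)
next
  assume "x \<leadsto> y = one"
  then have "x = (y \<rightarrow> x) \<cdot> y"
    by (simp add: imp_limp_divisibility mult_one_right)
  then show "x \<preceq> y"
    by (metis mult_le_right)
qed

lemma mult_le_iff_le_limp: "x \<cdot> y \<preceq> z \<longleftrightarrow> y \<preceq> x \<leadsto> z"
  by (simp add: le_iff_limp_eq_one limp_mult)

lemma mult_le_left: "x \<cdot> y \<preceq> x"
  by (simp add: le_iff_limp_eq_one limp_mult limp_self limp_one)

lemma imp_mult_le: "(x \<rightarrow> y) \<cdot> x \<preceq> y"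
  by (metis imp_divisibility mult_le_right)

lemma le_imp: "y \<preceq> x \<rightarrow> y"
  using mult_le_left mult_le_iff_le_imp by blast

lemma le_limp: "y \<preceq> x \<leadsto> y"
  using mult_le_right mult_le_iff_le_limp by blast

lemma le_limp_imp: "x \<preceq> (x \<leadsto> y) \<rightarrow> y"
  using mult_limp_le mult_le_iff_le_imp by blast

lemma le_imp_limp: "x \<preceq> (x \<rightarrow> y) \<leadsto> y"
  using imp_mult_le mult_le_iff_le_limp by blast

lemma upper_bound_eq_one:
  assumes "ph_is_sup imp one x y one" and "x \<preceq> z" and "y \<preceq> z"
  shows "z = one"
  using assms by (simp add: ph_is_sup_def one_le_iff)

lemma limp_eq_right_if_sup_one:
  assumes "ph_is_sup imp one x y one"
  shows "x \<leadsto> y = y"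
proof (rule le_antisym)
  have "(x \<leadsto> y) \<rightarrow> y = one"
    using assms le_limp_imp le_imp by (rule upper_bound_eq_one)
  then show "x \<leadsto> y \<preceq> y"
    by (simp add: ph_le_def)
  show "y \<preceq> x \<leadsto> y"
    by (rule le_limp)
qed

lemma imp_eq_right_if_sup_one:
  assumes "ph_is_sup imp one x y one"
  shows "x \<rightarrow> y = y"
proof (rule le_antisym)
  have "(x \<rightarrow> y) \<leadsto> y = one"
    using assms le_imp_limp le_limp by (rule upper_bound_eq_one)
  then show "x \<rightarrow> y \<preceq> y"
    by (simp add: le_iff_limp_eq_one)
  show "y \<preceq> x \<rightarrow> y"
    by (rule le_imp)
qed

end

theorem lemma4p1:
  fixes m imp limp :: "'a \<Rightarrow> 'a \<Rightarrow> 'a" and one x y :: 'a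
  assumes "pseudo_hoop m imp limp one"
    and "ph_is_sup imp one x y one"
  shows "m x y = ph_meet m imp x y \<and> ph_meet m imp x y = m y x \<and>
         imp x y = limp x y \<and> limp x y = y"
proof -
  interpret ph_algebra m imp limp one
    using assms(1) unfolding pseudo_hoop_def by unfold_locales auto
  have limp_xy: "limp x y = y" and imp_xy: "imp x y = y"
    using assms(2) by (rule limp_eq_right_if_sup_one, rule imp_eq_right_if_sup_one)
  have "ph_meet m imp x y = m x (limp x y)"
    unfolding ph_meet_def imp_divisibility[of x y] by (rule imp_limp_divisibility)
  moreover have "ph_meet m imp x y = m y x"
    unfolding ph_meet_def by (simp add: imp_xy)
  ultimately show ?thesis
    using limp_xy imp_xy by simp
qed

end
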